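(* Let $|\psi\rangle,|\phi\rangle,|e\rangle,|f\rangle$ be unit vectors in $\mathbb{C}^2$ and let $\mathcal{D}$ be the set of depolarizing channels $\Psi_\rho(A)=(\operatorname{tr}A)\rho$, $\rho$ a density operator on $\mathbb{C}^2$. Then $$\max_{\Psi\in\mathcal{D}}\left\{\frac12\langle e|\Psi(|\psi\rangle\langle\psi|)|e\rangle+\frac12\langle f|\Psi(|\phi\rangle\langle\phi|)|f\rangle\right\}=\frac12\left(1+|\langle e|f\rangle|\right).$$ This value equals $1$ if and only if $|\langle e|f\rangle|=1$; consequently, $(|\psi\rangle,|\phi\rangle)$ is jointly convertible into $(|e\rangle,|f\rangle)$ within $\mathcal{D}$ if and only if $|\langle e|f\rangle|=1$.
   Context: For a set $\mathcal{X}$ of quantum channels on $\mathcal{L}(\mathbb{C}^2)$, $(|\psi\rangle,|\phi\rangle)$ is jointly convertible into $(|e\rangle,|f\rangle)$ within $\mathcal{X}$ if there exists $\Psi\in\mathcal{X}$ with $\Psi(|\psi\rangle\langle\psi|)=|e\rangle\langle e|$ and $\Psi(|\phi\rangle\langle\phi|)=|f\rangle\langle f|$. *)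

theory Defs
  imports "HOL-Analysis.Analysis"
begin

text \<open>Vectors of C^2 are complex^2, operators on C^2 are complex^2^2
  (row index first). Bra-ket inner product, antilinear in the first argument.\<close>

definition braket :: "complex^2 \<Rightarrow> complex^2 \<Rightarrow> complex" where
  "braket x y = (\<Sum>i\<in>UNIV. cnj (x $ i) * y $ i)"

definition ketbra :: "complex^2 \<Rightarrow> complex^2^2" where
  "ketbra x = (\<chi> i j. x $ i * cnj (x $ j))"

definition density_op :: "complex^2^2 \<Rightarrow> bool" where
  "density_op \<rho> \<longleftrightarrow>
     (\<forall>v. braket v (\<rho> *v v) \<in> \<real> \<and> 0 \<le> Re (braket v (\<rho> *v v))) \<and> trace \<rho> = 1"

definition depol :: "complex^2^2 \<Rightarrow> complex^2^2 \<Rightarrow> complex^2^2" where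
  "depol \<rho> A = (\<chi> i j. trace A * \<rho> $ i $ j)"

definition depol_channels :: "(complex^2^2 \<Rightarrow> complex^2^2) set" where
  "depol_channels = {depol \<rho> | \<rho>. density_op \<rho>}"

definition jointly_convertible ::
  "(complex^2^2 \<Rightarrow> complex^2^2) set \<Rightarrow> complex^2 \<Rightarrow> complex^2 \<Rightarrow> complex^2 \<Rightarrow> complex^2 \<Rightarrow> bool" where
  "jointly_convertible X \<psi> \<phi> e f \<longleftrightarrow>
     (\<exists>\<Psi>\<in>X. \<Psi> (ketbra \<psi>) = ketbra e \<and> \<Psi> (ketbra \<phi>) = ketbra f)"

text \<open>Objective value (a real number for positive Psi(.)); we take its real part.\<close>
definition success_val ::
  "(complex^2^2 \<Rightarrow> complex^2^2) \<Rightarrow> complex^2 \<Rightarrow> complex^2 \<Rightarrow> complex^2 \<Rightarrow> complex^2 \<Rightarrow> real" where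
  "success_val \<Psi> \<psi> \<phi> e f =
     Re (braket e (\<Psi> (ketbra \<psi>) *v e) / 2 + braket f (\<Psi> (ketbra \<phi>) *v f) / 2)"

end

theory Submission
  imports Defs
begin

text \<open>Every density operator on C^2 is (I + r . sigma) / 2 for a Bloch vector r in the closed
  unit ball, and for a unit vector v one has <v|rho|v> = (1 + r . a_v) / 2, where a_v is the unit
  Bloch vector of |v><v|. A depolarizing channel sends every state to rho, so the objective is
  1/2 + r . (a_e + a_f) / 4, which by Cauchy-Schwarz is maximal at r = sgn (a_e + a_f); and
  |a_e + a_f|^2 = 2 + 2 a_e . a_f = 4 |<e|f>|^2. Joint convertibility forces
  rho = |e><e| = |f><f|, i.e. a_e = a_f, which happens iff |<e|f>| = 1.\<close>

lemma braket_2: "braket x y = cnj (x$1) * y$1 + cnj (x$2) * y$2"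
  by (simp add: braket_def sum_2)

lemma matrix_vector_mult_2: "((A::complex^2^2) *v v) $ i = A$i$1 * v$1 + A$i$2 * v$2"
  by (simp add: matrix_vector_mult_def sum_2)

lemma trace_2: "trace (A::complex^2^2) = A$1$1 + A$2$2"
  by (simp add: trace_def sum_2)

lemma norm_2_squared: "norm (v::complex^2) ^ 2 = cmod (v$1)^2 + cmod (v$2)^2"
  by (simp add: norm_vec_def L2_set_def sum_2)

lemma inner_3: "inner (x::real^3) y = x$1 * y$1 + x$2 * y$2 + x$3 * y$3"
  by (simp add: inner_vec_def sum_3)

lemma inner_sgn_self: "inner (sgn x) x = norm x"
  by (cases "x = 0") (simp_all add: sgn_div_norm power2_norm_eq_inner[symmetric] power2_eq_square)

definition bloch_vector :: "complex^2^2 \<Rightarrow> real^3" where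
  "bloch_vector A = vector [2 * Re (A$1$2), - 2 * Im (A$1$2), Re (A$1$1 - A$2$2)]"

text \<open>The density operator with Bloch vector r, i.e. (I + r1 X + r2 Y + r3 Z) / 2 for the
  Pauli matrices X, Y, Z; on Hermitian matrices of trace one, bloch_vector is its inverse.\<close>

definition bloch_op :: "real^3 \<Rightarrow> complex^2^2" where
  "bloch_op r = (\<chi> i j.
     if i = 1 then (if j = 1 then Complex ((1 + r$3) / 2) 0 else Complex (r$1 / 2) (- r$2 / 2))
     else (if j = 1 then Complex (r$1 / 2) (r$2 / 2) else Complex ((1 - r$3) / 2) 0))"

lemma bloch_op_nth [simp]:
  "bloch_op r $1$1 = Complex ((1 + r$3) / 2) 0" "bloch_op r $1$2 = Complex (r$1 / 2) (- r$2 / 2)"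
  "bloch_op r $2$1 = Complex (r$1 / 2) (r$2 / 2)" "bloch_op r $2$2 = Complex ((1 - r$3) / 2) 0"
  by (simp_all add: bloch_op_def)

lemma bloch_vector_nth [simp]:
  "bloch_vector A $ 1 = 2 * Re (A$1$2)" "bloch_vector A $ 2 = - 2 * Im (A$1$2)"
  "bloch_vector A $ 3 = Re (A$1$1 - A$2$2)"
  by (simp_all add: bloch_vector_def)

abbreviation bloch_ket :: "complex^2 \<Rightarrow> real^3" where
  "bloch_ket v \<equiv> bloch_vector (ketbra v)"

lemma ketbra_nth [simp]: "ketbra v $ i $ j = v$i * cnj (v$j)"
  by (simp add: ketbra_def)

lemma braket_self: "braket v v = of_real (norm v ^ 2)"
  unfolding braket_2 norm_2_squared cmod_power2 by (simp add: complex_eq_iff power2_eq_square)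

lemma trace_ketbra: "trace (ketbra v) = of_real (norm v ^ 2)"
  unfolding trace_2 norm_2_squared cmod_power2 by (simp add: complex_eq_iff power2_eq_square)

lemma braket_bloch_op:
  "braket v (bloch_op r *v v) = of_real ((norm v ^ 2 + inner r (bloch_ket v)) / 2)"
  unfolding braket_2 matrix_vector_mult_2 norm_2_squared inner_3 cmod_power2
  by (simp add: complex_eq_iff power2_eq_square field_simps)

lemma inner_bloch_ket:
  "inner (bloch_ket v) (bloch_ket w) = 2 * cmod (braket v w) ^ 2 - norm v ^ 2 * norm w ^ 2"
  unfolding braket_2 norm_2_squared inner_3 cmod_power2
  by (simp add: power2_eq_square algebra_simps)

lemma norm_bloch_ket: "norm (bloch_ket v) = norm v ^ 2"
proof -
  have "norm (bloch_ket v) ^ 2 = inner (bloch_ket v) (bloch_ket v)"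
    by (rule power2_norm_eq_inner)
  also have "\<dots> = (norm v ^ 2) ^ 2"
    unfolding inner_bloch_ket braket_self norm_of_real by (simp add: power2_eq_square)
  finally have "norm (bloch_ket v) ^ 2 = (norm v ^ 2) ^ 2" .
  then show ?thesis by (simp add: power2_eq_imp_eq)
qed

lemma density_op_bloch_op:
  assumes "norm r \<le> 1"
  shows "density_op (bloch_op r)"
  unfolding density_op_def
proof (intro conjI allI)
  fix v
  show "braket v (bloch_op r *v v) \<in> \<real>"
    by (simp add: braket_bloch_op)
  have "- inner r (bloch_ket v) \<le> norm r * norm v ^ 2"
    using norm_cauchy_schwarz[of "- r" "bloch_ket v"] by (simp add: norm_bloch_ket)
  also have "\<dots> \<le> norm v ^ 2"
    using assms by (simp add: mult_left_le_one_le)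
  finally show "0 \<le> Re (braket v (bloch_op r *v v))"
    by (simp add: braket_bloch_op)
  show "trace (bloch_op r) = 1"
    by (simp add: trace_2 complex_eq_iff field_simps)
qed

text \<open>For trace one, bloch_op (- r) is the adjugate of bloch_op r. Since a matrix times its
  adjugate is its determinant times I, the quadratic forms of bloch_op r at the columns of the
  adjugate add up to the determinant (1 - |r|^2) / 4; this is how positivity bounds |r|.\<close>

lemma adjugate_columns_form:
  "(\<Sum>j\<in>UNIV. braket (column j (bloch_op (- r))) (bloch_op r *v column j (bloch_op (- r))))
     = of_real ((1 - norm r ^ 2) / 4)"
  unfolding sum_2 braket_2 matrix_vector_mult_2 power2_norm_eq_inner inner_3
  by (simp add: column_def complex_eq_iff field_simps)

lemma bloch_op_bloch_vector_density_op:
  assumes "density_op \<rho>"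
  shows "bloch_op (bloch_vector \<rho>) = \<rho>"
proof -
  have real: "braket v (\<rho> *v v) \<in> \<real>" for v
    using assms by (simp add: density_op_def)
  have quad: "braket v (\<rho> *v v) = cnj (v$1) * (\<rho>$1$1 * v$1 + \<rho>$1$2 * v$2)
      + cnj (v$2) * (\<rho>$2$1 * v$1 + \<rho>$2$2 * v$2)" for v
    by (simp add: braket_2 matrix_vector_mult_2)
  have "Im (\<rho>$1$1) = 0" "Im (\<rho>$2$2) = 0"
    using real[of "vector [1, 0]"] real[of "vector [0, 1]"]
    unfolding quad by (simp_all add: complex_is_Real_iff)
  moreover have "Im (\<rho>$1$2) + Im (\<rho>$2$1) = 0"
    using real[of "vector [1, 1]"] calculation unfolding quad by (simp add: complex_is_Real_iff)
  moreover have "Re (\<rho>$1$2) = Re (\<rho>$2$1)"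
    using real[of "vector [1, \<i>]"] calculation unfolding quad by (simp add: complex_is_Real_iff)
  moreover have "Re (\<rho>$1$1) + Re (\<rho>$2$2) = 1"
    using assms by (simp add: density_op_def trace_2 complex_eq_iff)
  ultimately show ?thesis
    unfolding vec_eq_iff forall_2 by (auto simp: complex_eq_iff)
qed

lemma density_op_iff_bloch_ball:
  "density_op \<rho> \<longleftrightarrow> (\<exists>r. norm r \<le> 1 \<and> \<rho> = bloch_op r)"
proof
  assume \<rho>: "density_op \<rho>"
  define r where "r = bloch_vector \<rho>"
  have \<rho>_eq: "\<rho> = bloch_op r"
    using bloch_op_bloch_vector_density_op[OF \<rho>] by (simp add: r_def)
  have "0 \<le> Re (\<Sum>j\<in>UNIV. braket (column j (bloch_op (- r))) (\<rho> *v column j (bloch_op (- r))))"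
    using \<rho> unfolding Re_sum density_op_def by (simp add: sum_nonneg)
  then have "norm r ^ 2 \<le> 1 ^ 2"
    by (simp only: \<rho>_eq adjugate_columns_form Re_complex_of_real) simp
  then show "\<exists>r. norm r \<le> 1 \<and> \<rho> = bloch_op r"
    using \<rho>_eq power2_le_imp_le[of "norm r" 1] by auto
qed (auto intro: density_op_bloch_op)

lemma depol_ketbra:
  assumes "norm \<psi> = 1"
  shows "depol \<rho> (ketbra \<psi>) = \<rho>"
  using assms by (simp add: depol_def trace_ketbra vec_eq_iff)

lemma bloch_op_bloch_ket:
  assumes "norm v = 1"
  shows "bloch_op (bloch_ket v) = ketbra v"
proof -
  have "Re (v$1) ^ 2 + Im (v$1) ^ 2 + (Re (v$2) ^ 2 + Im (v$2) ^ 2) = 1"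
    using assms norm_2_squared[of v] by (simp add: cmod_power2)
  then show ?thesis
    unfolding vec_eq_iff forall_2 by (auto simp: complex_eq_iff power2_eq_square field_simps)
qed

lemma success_val_depol_bloch_op:
  assumes "norm \<psi> = 1" "norm \<phi> = 1" "norm e = 1" "norm f = 1"
  shows "success_val (depol (bloch_op r)) \<psi> \<phi> e f = (2 + inner r (bloch_ket e + bloch_ket f)) / 4"
  using assms
  by (simp add: success_val_def depol_ketbra braket_bloch_op inner_add_right field_simps)

lemma density_op_ketbra:
  assumes "norm v = 1"
  shows "density_op (ketbra v)"
  unfolding density_op_iff_bloch_ball
  using assms bloch_op_bloch_ket[OF assms]
  by (intro exI[of _ "bloch_ket v"]) (simp add: norm_bloch_ket)

lemma inner_bloch_ket_unit:
  assumes "norm e = 1" "norm f = 1"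
  shows "inner (bloch_ket e) (bloch_ket f) = 2 * cmod (braket e f) ^ 2 - 1"
  using assms by (simp add: inner_bloch_ket)

lemma norm_bloch_ket_add:
  assumes "norm e = 1" "norm f = 1"
  shows "norm (bloch_ket e + bloch_ket f) = 2 * cmod (braket e f)"
proof -
  have "2 * cmod (braket e f) ^ 2 - 1 = (norm (bloch_ket e + bloch_ket f) ^ 2 - 1 - 1) / 2"
    using dot_norm[of "bloch_ket e" "bloch_ket f"]
    by (simp only: inner_bloch_ket_unit norm_bloch_ket assms power_one)
  then have "norm (bloch_ket e + bloch_ket f) ^ 2 = (2 * cmod (braket e f)) ^ 2"
    unfolding power_mult_distrib by simp
  then show ?thesis
    by (rule power2_eq_imp_eq) simp_all
qed

lemma ketbra_eq_iff:
  assumes "norm e = 1" "norm f = 1"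
  shows "ketbra e = ketbra f \<longleftrightarrow> cmod (braket e f) = 1"
proof -
  have "2 * cmod (braket e f) ^ 2 - 1 = (1 + 1 - norm (bloch_ket e - bloch_ket f) ^ 2) / 2"
    using dot_norm_neg[of "bloch_ket e" "bloch_ket f"]
    by (simp only: inner_bloch_ket_unit norm_bloch_ket assms power_one)
  then have dist: "norm (bloch_ket e - bloch_ket f) ^ 2 = 4 * (1 - cmod (braket e f) ^ 2)"
    by (simp add: field_simps)
  have "ketbra e = ketbra f \<longleftrightarrow> bloch_ket e = bloch_ket f"
    using bloch_op_bloch_ket[OF assms(1)] bloch_op_bloch_ket[OF assms(2)] by metis
  also have "\<dots> \<longleftrightarrow> norm (bloch_ket e - bloch_ket f) ^ 2 = 0"
    by simp
  also have "\<dots> \<longleftrightarrow> cmod (braket e f) ^ 2 = 1"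
    unfolding dist by simp
  also have "\<dots> \<longleftrightarrow> cmod (braket e f) = 1"
    by (simp add: abs_square_eq_1)
  finally show ?thesis .
qed

lemma jointly_convertible_depol_iff:
  assumes "norm \<psi> = 1" "norm \<phi> = 1" "norm e = 1"
  shows "jointly_convertible depol_channels \<psi> \<phi> e f \<longleftrightarrow> ketbra e = ketbra f"
  unfolding jointly_convertible_def depol_channels_def
  using depol_ketbra[OF assms(1)] depol_ketbra[OF assms(2)] density_op_ketbra[OF assms(3)] by auto

theorem corollary1:
  fixes \<psi> \<phi> e f :: "complex^2"
  assumes "norm \<psi> = 1" and "norm \<phi> = 1" and "norm e = 1" and "norm f = 1"
  shows "(\<exists>\<Psi>\<in>depol_channels. success_val \<Psi> \<psi> \<phi> e f = (1 + cmod (braket e f)) / 2)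
       \<and> (\<forall>\<Psi>\<in>depol_channels. success_val \<Psi> \<psi> \<phi> e f \<le> (1 + cmod (braket e f)) / 2)
       \<and> ((1 + cmod (braket e f)) / 2 = 1 \<longleftrightarrow> cmod (braket e f) = 1)
       \<and> (jointly_convertible depol_channels \<psi> \<phi> e f \<longleftrightarrow> cmod (braket e f) = 1)"
proof -
  define m where "m = bloch_ket e + bloch_ket f"
  have norm_m: "norm m = 2 * cmod (braket e f)"
    unfolding m_def using assms(3,4) by (rule norm_bloch_ket_add)
  have objective: "success_val (depol (bloch_op r)) \<psi> \<phi> e f = (2 + inner r m) / 4" for r
    unfolding m_def using assms by (rule success_val_depol_bloch_op)
  have attained: "\<exists>\<Psi>\<in>depol_channels. success_val \<Psi> \<psi> \<phi> e f = (1 + cmod (braket e f)) / 2"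
  proof
    show "depol (bloch_op (sgn m)) \<in> depol_channels"
      unfolding depol_channels_def using density_op_bloch_op[of "sgn m"] by (auto simp: norm_sgn)
    show "success_val (depol (bloch_op (sgn m))) \<psi> \<phi> e f = (1 + cmod (braket e f)) / 2"
      by (simp add: objective inner_sgn_self norm_m field_simps)
  qed
  have bounded: "\<forall>\<Psi>\<in>depol_channels. success_val \<Psi> \<psi> \<phi> e f \<le> (1 + cmod (braket e f)) / 2"
  proof
    fix \<Psi> assume "\<Psi> \<in> depol_channels"
    then obtain r where r: "norm r \<le> 1" and \<Psi>: "\<Psi> = depol (bloch_op r)"
      unfolding depol_channels_def density_op_iff_bloch_ball by blast
    have "inner r m \<le> norm m"
      using norm_cauchy_schwarz[of r m] mult_right_mono[OF r norm_ge_zero[of m]] by simp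
    then show "success_val \<Psi> \<psi> \<phi> e f \<le> (1 + cmod (braket e f)) / 2"
      unfolding \<Psi> objective norm_m by simp
  qed
  show ?thesis
    using attained bounded jointly_convertible_depol_iff[OF assms(1-3)] ketbra_eq_iff[OF assms(3,4)]
    by auto
qed

end
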